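(* Suppose $(U_n)_{n\ge1}$ is i.i.d. with law $(p_A,p_C,p_G,p_T)$, all $p_u>0$, and not uniform. Then $D_n/\ln n$ does not converge almost surely; more precisely $\limsup_n D_n/\ln n\ge 1/h>1/h_+=\liminf_n D_n/\ln n$ almost surely, where $h=-\sum_u p_u\ln p_u$ and $h_+=\ln(1/\min_u p_u)$.
   Context: Alphabet $\mathcal A=\{A,C,G,T\}$. CGR-tree: nodes are finite words over $\mathcal A$ (root = empty word). With $W(n)=U_n\dots U_1$, $\mathcal T_0=\{\text{root}\}$; for $n\ge1$, $D_n$ is the smallest $k\ge1$ such that the length-$k$ prefix of $W(n)$ is not a node of $\mathcal T_{n-1}$, and $\mathcal T_n$ is $\mathcal T_{n-1}$ with that prefix added. *)

theory Defs
  imports "HOL-Probability.Probability"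
begin

datatype letter = A | C | G | T

definition cgr_word :: "(nat \<Rightarrow> letter) \<Rightarrow> nat \<Rightarrow> letter list" where
  "cgr_word u n = map u (rev [1..<Suc n])"

definition cgr_depth_in :: "letter list set \<Rightarrow> letter list \<Rightarrow> nat" where
  "cgr_depth_in Tr W = (LEAST k. 1 \<le> k \<and> k \<le> length W \<and> take k W \<notin> Tr)"

fun cgr_tree :: "(nat \<Rightarrow> letter) \<Rightarrow> nat \<Rightarrow> letter list set" where
  "cgr_tree u 0 = {[]}"
| "cgr_tree u (Suc n) =
     insert (take (cgr_depth_in (cgr_tree u n) (cgr_word u (Suc n))) (cgr_word u (Suc n)))
            (cgr_tree u n)"

text \<open>D_n for n \<ge> 1.\<close>
definition cgr_D :: "(nat \<Rightarrow> letter) \<Rightarrow> nat \<Rightarrow> nat" where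
  "cgr_D u n = cgr_depth_in (cgr_tree u (n - 1)) (cgr_word u n)"

end

(* Write X n = D n / ln n, h for the entropy of the letter law and h+ = ln (1 / p_min).

   liminf X >= 1/h+.  Fix b with b h+ < 1, let k = b ln n and cut the first n steps into k
   stages of length L = n / k.  In stage j each word of length j, having probability at least
   p_min^j >= n^(-b h+), occurs in one of the L / j disjoint windows of that stage, except with
   probability exp (-n^(1 - b h+ - o(1))); and once all words shorter than j are nodes, an
   occurrence of a word of length j makes it a node.  So, by Borel-Cantelli, all words of length
   at most b ln n are eventually nodes of T(n-1), which forces D n > b ln n.

   liminf X <= 1/h+.  Let a be a letter of minimal probability and g < 1.  For large j the word
   a^j does not occur before time p_min^(-g j), but it does occur (every word becomes a node);
   at its first occurrence n it is inserted at depth at most j, while ln n > g j h+.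

   limsup X >= 1/h.  Suppose D m <= c ln m for all large m, with c h < 1, and take a between h
   and 1/c.  Only O(n^(a c) ln n) words of length O(ln n) have probability >= exp (-a length),
   so at least n/2 of the n + 1 nodes of T n are "unlikely" prefixes of some W m.  By a
   Chernoff bound the expected number of unlikely prefixes longer than J is O(n rho^J) with
   rho < 1, so by Markov's inequality the event has probability O(rho^J), i.e. zero.

   Finally h < h+ since the law is not uniform. *)

theory Submission
  imports Defs "HOL-Real_Asymp.Real_Asymp"
begin

section \<open>Elementary estimates\<close>

lemma one_minus_power_le_exp:
  assumes "0 \<le> (x::real)" "x \<le> 1"
  shows "(1 - x) ^ n \<le> exp (- x * n)"
proof -
  have "(1 - x) ^ n \<le> exp (- x) ^ n"
    using assms by (intro power_mono) (auto simp: exp_ge_add_one_self[of "-x", simplified] add.commute)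
  also have "\<dots> = exp (- x * n)" by (simp add: exp_of_nat_mult[symmetric] mult.commute)
  finally show ?thesis .
qed

lemma real_of_nat_div_ge: "real a / real b - 1 \<le> real (a div b)"
proof -
  have "real a / real b - 1 < of_int \<lfloor>real a / real b\<rfloor>"
    by (rule real_of_int_floor_gt_diff_one)
  also have "of_int \<lfloor>real a / real b\<rfloor> = real (a div b)"
    using floor_divide_of_nat_eq[where 'a = real, of a b] by simp
  finally show ?thesis by simp
qed

lemma sum_power_greaterThanAtMost_le:
  fixes r :: real
  assumes "0 \<le> r" "r < 1"
  shows "(\<Sum>j\<in>{J<..m}. r ^ j) \<le> r ^ Suc J / (1 - r)"
proof -
  have "(\<Sum>j\<in>{J<..m}. r ^ j) = (\<Sum>j=Suc J..m. r ^ j)"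
    by (simp add: atLeastSucAtMost_greaterThanAtMost)
  also have "\<dots> \<le> r ^ Suc J / (1 - r)"
    using assms by (auto simp: sum_gp divide_right_mono)
  finally show ?thesis .
qed

lemma Limsup_ge_if_frequently:
  fixes f :: "'a \<Rightarrow> 'b::complete_linorder"
  assumes "\<exists>\<^sub>F x in F. c \<le> f x"
  shows "c \<le> Limsup F f"
proof (rule Limsup_greatest)
  fix P assume "eventually P F"
  then obtain x where "P x" "c \<le> f x"
    using frequently_ex[OF frequently_eventually_frequently[OF assms]] by blast
  then show "c \<le> (SUP x\<in>Collect P. f x)" by (intro SUP_upper2) auto
qed

lemma Liminf_le_if_frequently:
  fixes f :: "'a \<Rightarrow> 'b::complete_linorder"
  assumes "\<exists>\<^sub>F x in F. f x \<le> c"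
  shows "Liminf F f \<le> c"
proof (rule Liminf_least)
  fix P assume "eventually P F"
  then obtain x where "P x" "f x \<le> c"
    using frequently_ex[OF frequently_eventually_frequently[OF assms]] by blast
  then show "(INF x\<in>Collect P. f x) \<le> c" by (intro INF_lower2) auto
qed

lemma AE_ereal_ge_if_scaled:
  fixes L :: "'a \<Rightarrow> ereal"
  assumes "\<And>c. 0 < c \<Longrightarrow> c < 1 \<Longrightarrow> AE \<omega> in M. ereal (c * x) \<le> L \<omega>"
  shows "AE \<omega> in M. ereal x \<le> L \<omega>"
proof -
  define e where "e k = 1 - 1 / (real k + 2)" for k :: nat
  have "e \<longlonglongrightarrow> 1" unfolding e_def by real_asymp
  then have "(\<lambda>k. e k * x) \<longlonglongrightarrow> 1 * x"
    by (intro tendsto_intros)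
  then have lim: "(\<lambda>k. ereal (e k * x)) \<longlonglongrightarrow> ereal x"
    by (simp add: lim_ereal)
  have "AE \<omega> in M. \<forall>k. ereal (e k * x) \<le> L \<omega>"
    unfolding AE_all_countable by (intro allI assms) (auto simp: e_def field_simps)
  then show ?thesis
    by eventually_elim (rule LIMSEQ_le_const2[OF lim], auto)
qed

lemma AE_ereal_le_if_scaled:
  fixes L :: "'a \<Rightarrow> ereal"
  assumes "\<And>c. 0 < c \<Longrightarrow> c < 1 \<Longrightarrow> AE \<omega> in M. L \<omega> \<le> ereal (x / c)"
  shows "AE \<omega> in M. L \<omega> \<le> ereal x"
proof -
  define e where "e k = 1 - 1 / (real k + 2)" for k :: nat
  have "e \<longlonglongrightarrow> 1" unfolding e_def by real_asymp
  then have "(\<lambda>k. x / e k) \<longlonglongrightarrow> x / 1"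
    by (intro tendsto_intros) auto
  then have lim: "(\<lambda>k. ereal (x / e k)) \<longlonglongrightarrow> ereal x"
    by (simp add: lim_ereal)
  have "AE \<omega> in M. \<forall>k. L \<omega> \<le> ereal (x / e k)"
    unfolding AE_all_countable by (intro allI assms) (auto simp: e_def field_simps)
  then show ?thesis
    by eventually_elim (rule LIMSEQ_le_const[OF lim], auto)
qed

lemma (in prob_space) sum_prob_values:
  assumes "X \<in> measurable M (count_space UNIV)"
  shows "(\<Sum>u\<in>UNIV. prob {\<omega> \<in> space M. X \<omega> = (u :: 'b::finite)}) = 1"
proof -
  have "(\<Sum>u\<in>UNIV. prob {\<omega> \<in> space M. X \<omega> = u}) = prob (\<Union>u. {\<omega> \<in> space M. X \<omega> = u})"
    using assms by (intro finite_measure_finite_Union[symmetric]) (auto simp: disjoint_family_on_def)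
  also have "(\<Union>u. {\<omega> \<in> space M. X \<omega> = u}) = space M" by auto
  finally show ?thesis by (simp add: prob_space)
qed

lemma (in prob_space) prob_card_ge_le:
  assumes "finite S" "\<And>x. x \<in> S \<Longrightarrow> B x \<in> events" "0 < (c::real)"
  shows "prob {\<omega> \<in> space M. c \<le> card {x \<in> S. \<omega> \<in> B x}} \<le> (\<Sum>x\<in>S. prob (B x)) / c"
proof -
  let ?N = "\<lambda>\<omega>. \<Sum>x\<in>S. indicator (B x) \<omega> :: real"
  have N: "?N \<omega> = card {x \<in> S. \<omega> \<in> B x}" for \<omega>
    using sum.inter_filter[OF \<open>finite S\<close>, of "\<lambda>_. 1::real" "\<lambda>x. \<omega> \<in> B x"]
    by (simp add: indicator_def of_bool_def sum.If_cases[OF \<open>finite S\<close>])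
  have int: "integrable M (indicator (B x) :: 'a \<Rightarrow> real)" if "x \<in> S" for x
    using assms that by (intro integrable_real_indicator) (auto simp: less_top[symmetric])
  have "prob {\<omega> \<in> space M. c \<le> ?N \<omega>} \<le> (\<integral>\<omega>. ?N \<omega> \<partial>M) / c"
    using assms int by (intro integral_Markov_inequality_measure) (auto intro!: sum_nonneg)
  also have "(\<integral>\<omega>. ?N \<omega> \<partial>M) = (\<Sum>x\<in>S. prob (B x))"
    using assms int by (subst Bochner_Integration.integral_sum) auto
  finally show ?thesis unfolding N .
qed

section \<open>The CGR tree of a fixed letter sequence\<close>

lemma length_cgr_word [simp]: "length (cgr_word u n) = n"
  by (simp add: cgr_word_def)

lemma nth_cgr_word: "i < n \<Longrightarrow> cgr_word u n ! i = u (n - i)"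
  unfolding cgr_word_def by (simp add: rev_nth Suc_diff_Suc del: upt_Suc)

lemma cgr_word_eq_Nil_iff [simp]: "cgr_word u n = [] \<longleftrightarrow> n = 0"
  by (metis length_cgr_word length_0_conv)

lemma cgr_word_cong: "(\<And>i. 1 \<le> i \<Longrightarrow> i \<le> n \<Longrightarrow> u i = v i) \<Longrightarrow> cgr_word u n = cgr_word v n"
  by (auto simp: cgr_word_def)

lemma cgr_tree_cong: "(\<And>i. 1 \<le> i \<Longrightarrow> i \<le> n \<Longrightarrow> u i = v i) \<Longrightarrow> cgr_tree u n = cgr_tree v n"
proof (induction n)
  case (Suc n)
  then have "cgr_tree u n = cgr_tree v n" "cgr_word u (Suc n) = cgr_word v (Suc n)"
    by (auto intro: cgr_word_cong)
  then show ?case by simp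
qed simp

lemma cgr_D_cong: "(\<And>i. 1 \<le> i \<Longrightarrow> i \<le> n \<Longrightarrow> u i = v i) \<Longrightarrow> cgr_D u n = cgr_D v n"
proof -
  assume uv: "\<And>i. 1 \<le> i \<Longrightarrow> i \<le> n \<Longrightarrow> u i = v i"
  have "cgr_tree u (n - 1) = cgr_tree v (n - 1)" "cgr_word u n = cgr_word v n"
    by (auto intro!: cgr_tree_cong cgr_word_cong uv)
  then show ?thesis by (simp add: cgr_D_def)
qed

lemma finite_cgr_tree [simp]: "finite (cgr_tree u n)"
  by (induction n) auto

lemma Nil_in_cgr_tree [simp]: "[] \<in> cgr_tree u n"
  by (induction n) auto

lemma card_cgr_tree_le: "card (cgr_tree u n) \<le> Suc n"
  by (induction n) (auto simp: card_insert_if)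

text \<open>The nonempty prefixes of \<open>W(n)\<close> are \<open>n\<close> distinct words, while \<open>T\<^sub>n\<^sub>-\<^sub>1\<close> has at most
  \<open>n - 1\<close> nonempty nodes; so \<open>D\<^sub>n\<close> is well defined.\<close>
lemma cgr_depth_exists:
  assumes "1 \<le> n"
  shows "\<exists>k. 1 \<le> k \<and> k \<le> n \<and> take k (cgr_word u n) \<notin> cgr_tree u (n - 1)"
proof (rule ccontr)
  assume "\<not> ?thesis"
  then have sub: "(\<lambda>k. take k (cgr_word u n)) ` {1..n} \<subseteq> cgr_tree u (n - 1) - {[]}"
    by (auto simp: take_eq_Nil)
  have inj: "inj_on (\<lambda>k. take k (cgr_word u n)) {1..n}"
    by (rule inj_onI) (metis atLeastAtMost_iff length_cgr_word length_take min.absorb2)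
  have "n = card ((\<lambda>k. take k (cgr_word u n)) ` {1..n})"
    using card_image[OF inj] by simp
  also have "\<dots> \<le> card (cgr_tree u (n - 1) - {[]})"
    by (rule card_mono) (use sub in auto)
  also have "\<dots> \<le> n - 1"
    using card_cgr_tree_le[of u "n - 1"] assms by simp
  finally show False using assms by simp
qed

lemma
  assumes "1 \<le> n"
  shows cgr_D_le: "cgr_D u n \<le> n"
    and take_cgr_D_notin_cgr_tree: "take (cgr_D u n) (cgr_word u n) \<notin> cgr_tree u (n - 1)"
proof -
  let ?P = "\<lambda>k. 1 \<le> k \<and> k \<le> length (cgr_word u n) \<and> take k (cgr_word u n) \<notin> cgr_tree u (n - 1)"
  have "?P (Least ?P)"
    by (rule LeastI_ex) (use cgr_depth_exists[OF assms] in simp)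
  then show "cgr_D u n \<le> n" "take (cgr_D u n) (cgr_word u n) \<notin> cgr_tree u (n - 1)"
    by (simp_all add: cgr_D_def cgr_depth_in_def)
qed

lemma cgr_D_le_if_notin:
  assumes "1 \<le> k" "k \<le> n" "take k (cgr_word u n) \<notin> cgr_tree u (n - 1)"
  shows "cgr_D u n \<le> k"
  unfolding cgr_D_def cgr_depth_in_def by (rule Least_le) (use assms in auto)

lemma cgr_tree_Suc:
  "cgr_tree u (Suc n) = insert (take (cgr_D u (Suc n)) (cgr_word u (Suc n))) (cgr_tree u n)"
  by (simp add: cgr_D_def)

lemma cgr_tree_mono: "m \<le> n \<Longrightarrow> cgr_tree u m \<subseteq> cgr_tree u n"
proof (induction n)
  case (Suc n) then show ?case
    by (cases "m = Suc n") (auto simp: cgr_tree_Suc simp del: cgr_tree.simps)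
qed simp

lemma card_cgr_tree: "card (cgr_tree u n) = Suc n"
proof (induction n)
  case (Suc n)
  have "take (cgr_D u (Suc n)) (cgr_word u (Suc n)) \<notin> cgr_tree u n"
    using take_cgr_D_notin_cgr_tree[of "Suc n" u] by simp
  with Suc show ?case by (simp add: cgr_tree_Suc del: cgr_tree.simps)
qed simp

lemma cgr_tree_eq:
  "cgr_tree u n = insert [] {take (cgr_D u m) (cgr_word u m) | m. 1 \<le> m \<and> m \<le> n}"
proof (induction n)
  case (Suc n)
  have "{take (cgr_D u m) (cgr_word u m) | m. 1 \<le> m \<and> m \<le> Suc n} =
        insert (take (cgr_D u (Suc n)) (cgr_word u (Suc n)))
          {take (cgr_D u m) (cgr_word u m) | m. 1 \<le> m \<and> m \<le> n}"
    by (auto simp: le_Suc_eq)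
  then show ?case using Suc.IH by (simp add: cgr_tree_Suc insert_commute del: cgr_tree.simps)
qed simp

lemma cgr_tree_node_inserted:
  assumes "x \<in> cgr_tree u n" "x \<noteq> []"
  obtains m where "1 \<le> m" "m \<le> n" "length x = cgr_D u m" "length x \<le> m"
    "take (length x) (cgr_word u m) = x"
proof -
  obtain m where m: "1 \<le> m" "m \<le> n" "x = take (cgr_D u m) (cgr_word u m)"
    using assms by (auto simp: cgr_tree_eq)
  moreover have "cgr_D u m \<le> m" using cgr_D_le[OF m(1)] .
  ultimately show thesis by (intro that[of m]) auto
qed

text \<open>All shorter prefixes of \<open>W(m)\<close> are nodes, so if the prefix of length \<open>j + 1\<close> is not yet a
  node, it is the one inserted at time \<open>m\<close>.\<close>
lemma take_Suc_cgr_word_in_cgr_tree: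
  assumes short: "\<And>x. length x \<le> j \<Longrightarrow> x \<in> cgr_tree u s" and "s < m" "j < m"
  shows "take (Suc j) (cgr_word u m) \<in> cgr_tree u m"
proof (cases "take (Suc j) (cgr_word u m) \<in> cgr_tree u (m - 1)")
  case True
  then show ?thesis using cgr_tree_mono[of "m - 1" m u] by auto
next
  case False
  have m: "1 \<le> m" using assms by simp
  have "cgr_D u m \<le> Suc j" using False assms by (intro cgr_D_le_if_notin) auto
  moreover have "\<not> cgr_D u m \<le> j"
  proof
    assume "cgr_D u m \<le> j"
    then have "take (cgr_D u m) (cgr_word u m) \<in> cgr_tree u s"
      by (intro short) simp
    moreover have "s \<le> m - 1" using \<open>s < m\<close> by simp
    ultimately have "take (cgr_D u m) (cgr_word u m) \<in> cgr_tree u (m - 1)"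
      using cgr_tree_mono by blast
    then show False using take_cgr_D_notin_cgr_tree[OF m] by contradiction
  qed
  ultimately show ?thesis using m cgr_tree_Suc[of u "m - 1"] by (simp add: le_Suc_eq)
qed

lemma cgr_D_gt_if_short_words_in_cgr_tree:
  assumes "\<And>x. length x \<le> k \<Longrightarrow> x \<in> cgr_tree u (n - 1)" "1 \<le> n"
  shows "k < cgr_D u n"
proof (rule ccontr)
  assume "\<not> k < cgr_D u n"
  then have "take (cgr_D u n) (cgr_word u n) \<in> cgr_tree u (n - 1)" by (intro assms) simp
  then show False using take_cgr_D_notin_cgr_tree[OF assms(2)] by contradiction
qed

lemma cgr_D_le_at_first_occurrence:
  assumes "1 \<le> j" "j \<le> n" "take j (cgr_word u n) = w"
    and first: "\<And>m. 1 \<le> m \<Longrightarrow> m < n \<Longrightarrow> j \<le> m \<Longrightarrow> take j (cgr_word u m) \<noteq> w"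
  shows "cgr_D u n \<le> j"
proof (rule cgr_D_le_if_notin)
  have len: "length w = j" using assms by auto
  show "take j (cgr_word u n) \<notin> cgr_tree u (n - 1)"
  proof
    assume "take j (cgr_word u n) \<in> cgr_tree u (n - 1)"
    then have "w \<in> cgr_tree u (n - 1)" "w \<noteq> []" using assms len by auto
    then obtain m where "1 \<le> m" "m \<le> n - 1" "length w \<le> m" "take (length w) (cgr_word u m) = w"
      by (rule cgr_tree_node_inserted)
    then show False using first[of m] len by simp
  qed
qed (use assms in auto)

text \<open>The schedule used to fill the tree: the first \<open>k * L\<close> steps are cut into \<open>k\<close> stages of
  length \<open>L\<close>, and stage \<open>j\<close> (steps \<open>(j - 1) * L < m \<le> j * L\<close>) contains the \<open>L div j\<close> disjoint
  windows \<open>{m - j<..m}\<close> of length \<open>j\<close> ending at \<open>m = stage_end L j r\<close>, \<open>r < L div j\<close>.\<close>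
definition stage_end :: "nat \<Rightarrow> nat \<Rightarrow> nat \<Rightarrow> nat" where
  "stage_end L j r = (j - 1) * L + j * (r + 1)"

lemma stage_end_le:
  assumes "r < L div j"
  shows "stage_end L j r \<le> j * L"
proof -
  have "j * (r + 1) \<le> j * (L div j)" using assms by (intro mult_le_mono2) simp
  also have "\<dots> \<le> L" by simp
  finally show ?thesis by (cases j) (auto simp: stage_end_def)
qed

lemma disjoint_stage_windows:
  "disjoint_family_on (\<lambda>r. {stage_end L j r - j<..stage_end L j r}) {..<R}"
proof -
  have "{stage_end L j r - j<..stage_end L j r} \<inter> {stage_end L j r' - j<..stage_end L j r'} = {}"
    if "r < r'" for r r'
  proof -
    have "j * r + j \<le> j * r'" using that by (metis Suc_leI mult_Suc_right mult_le_mono2 add.commute)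
    then show ?thesis by (auto simp: stage_end_def)
  qed
  then show ?thesis
    unfolding disjoint_family_on_def by (metis Int_commute nat_neq_iff)
qed

lemma short_words_in_cgr_tree_if_stages_hit:
  assumes hit: "\<And>j w. 1 \<le> j \<Longrightarrow> j \<le> k \<Longrightarrow> length w = j \<Longrightarrow>
                  \<exists>r < L div j. take j (cgr_word u (stage_end L j r)) = w"
    and "k * L \<le> n" "length x \<le> k"
  shows "x \<in> cgr_tree u n"
proof -
  have "x \<in> cgr_tree u (j * L)" if "j \<le> k" "length x \<le> j" for j x
    using that
  proof (induction j arbitrary: x)
    case (Suc j)
    show ?case
    proof (cases "length x \<le> j")
      case True
      then show ?thesis using Suc cgr_tree_mono[of "j * L" "Suc j * L" u] by auto
    next
      case False
      then obtain r where r: "r < L div Suc j" "take (Suc j) (cgr_word u (stage_end L (Suc j) r)) = x"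
        using hit[of "Suc j" x] Suc.prems by auto
      have "x \<in> cgr_tree u (stage_end L (Suc j) r)"
        unfolding r(2)[symmetric]
        by (rule take_Suc_cgr_word_in_cgr_tree[where s = "j * L"]) (use Suc in \<open>auto simp: stage_end_def\<close>)
      then show ?thesis using cgr_tree_mono[OF stage_end_le[OF r(1)]] by auto
    qed
  qed simp
  then show ?thesis using assms cgr_tree_mono[of "k * L" n u] by auto
qed

section \<open>Probability vectors on a finite alphabet\<close>

lemma finite_lists_length_UNIV [simp]: "finite {w :: 'a::finite list. length w = n}"
  using finite_lists_length_eq[of "UNIV :: 'a set" n] by simp

lemma finite_lists_length_le_UNIV [simp]: "finite {w :: 'a::finite list. length w \<le> n}"
  using finite_lists_length_le[of "UNIV :: 'a set" n] by simp

lemma card_lists_length_UNIV [simp]: "card {w :: 'a::finite list. length w = n} = CARD('a) ^ n"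
  using card_lists_length_eq[of "UNIV :: 'a set" n] by simp

lemma card_lists_length_between_le:
  "card {w :: 'a::finite list. 1 \<le> length w \<and> length w \<le> k} \<le> k * CARD('a) ^ k"
proof -
  have "{w :: 'a list. 1 \<le> length w \<and> length w \<le> k} = (\<Union>j\<in>{1..k}. {w. length w = j})"
    by auto
  then have "card {w :: 'a list. 1 \<le> length w \<and> length w \<le> k} \<le> (\<Sum>j\<in>{1..k}. CARD('a) ^ j)"
    using card_UN_le[of "{1..k}" "\<lambda>j. {w :: 'a list. length w = j}"] by simp
  also have "\<dots> \<le> (\<Sum>j\<in>{1..k}. CARD('a) ^ k)"
    by (intro sum_mono power_increasing) (auto simp: Suc_le_eq)
  finally show ?thesis by simp
qed

lemma sum_prod_list_lists_length:
  fixes f :: "'a::finite \<Rightarrow> 'b::comm_semiring_1"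
  shows "(\<Sum>w | length w = j. prod_list (map f w)) = (\<Sum>u\<in>UNIV. f u) ^ j"
proof (induction j)
  case (Suc j)
  have lists: "{w. length w = Suc j} = (\<lambda>(u, w). u # w) ` (UNIV \<times> {w. length w = j})"
    by (auto simp: length_Suc_conv)
  have inj: "inj_on (\<lambda>(u, w). u # w) (UNIV \<times> {w :: 'a list. length w = j})"
    by (auto simp: inj_on_def)
  have "(\<Sum>w | length w = Suc j. prod_list (map f w))
      = (\<Sum>(u, w)\<in>UNIV \<times> {w. length w = j}. f u * prod_list (map f w))"
    unfolding lists by (subst sum.reindex[OF inj]) (simp add: case_prod_beta)
  also have "\<dots> = (\<Sum>u\<in>UNIV. f u * (\<Sum>w | length w = j. prod_list (map f w)))"
    by (simp add: sum.cartesian_product[symmetric] sum_distrib_left)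
  finally show ?case by (simp add: Suc.IH sum_distrib_right)
qed simp

locale positive_distribution =
  fixes p :: "'a::finite \<Rightarrow> real"
  assumes p_pos: "\<And>u. 0 < p u"
    and sum_p: "(\<Sum>u\<in>UNIV. p u) = 1"
    and card_ge_2: "2 \<le> CARD('a)"
begin

definition pmin :: real where "pmin = Min (range p)"

definition hplus :: real where "hplus = ln (1 / pmin)"

definition shannon_entropy :: real where "shannon_entropy = - (\<Sum>u\<in>UNIV. p u * ln (p u))"

definition chernoff :: "real \<Rightarrow> real \<Rightarrow> real" where
  "chernoff s a = (\<Sum>u\<in>UNIV. p u powr (1 - s)) * exp (- s * a)"

lemma pmin_le: "pmin \<le> p u"
  unfolding pmin_def by (rule Min_le) auto

lemma pmin_attained:
  obtains a where "p a = pmin"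
proof -
  have "Min (range p) \<in> range p" by (rule Min_in) auto
  then obtain a where "Min (range p) = p a" by (rule rangeE)
  then show thesis using that[of a] by (simp add: pmin_def)
qed

lemma pmin_pos: "0 < pmin"
proof -
  obtain a where "p a = pmin" by (rule pmin_attained)
  then show ?thesis using p_pos[of a] by simp
qed

lemma pmin_lt_1: "pmin < 1"
proof -
  have "(\<Sum>u\<in>(UNIV::'a set). pmin) \<le> (\<Sum>u\<in>UNIV. p u)" by (rule sum_mono) (rule pmin_le)
  then have "CARD('a) * pmin \<le> 1" using sum_p by simp
  moreover have "2 * pmin \<le> CARD('a) * pmin"
    using card_ge_2 pmin_pos by (intro mult_right_mono) auto
  ultimately show ?thesis by linarith
qed

lemma hplus_pos: "0 < hplus"
  unfolding hplus_def using pmin_pos pmin_lt_1 by simp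

lemma ln_pmin: "ln pmin = - hplus"
  unfolding hplus_def using pmin_pos by (simp add: ln_div)

lemma p_le_1: "p u \<le> 1"
  using member_le_sum[of u UNIV p] p_pos sum_p by (simp add: less_imp_le)

lemma p_lt_1: "p u < 1"
proof -
  have "card (UNIV - {u}) \<noteq> 0"
    using card_ge_2 by (simp add: card_Diff_singleton)
  then have "UNIV - {u} \<noteq> {}" by (intro notI) simp
  then have "0 < (\<Sum>v\<in>UNIV - {u}. p v)" by (intro sum_pos) (auto intro: p_pos)
  moreover have "p u + (\<Sum>v\<in>UNIV - {u}. p v) = 1" using sum_p sum.remove[of UNIV u p] by simp
  ultimately show ?thesis by linarith
qed

lemma shannon_entropy_pos: "0 < shannon_entropy"
proof -
  have "0 < (\<Sum>u\<in>UNIV. - (p u * ln (p u)))"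
    using p_pos p_lt_1 by (intro sum_pos) (auto simp: mult_pos_neg)
  then show ?thesis by (simp add: shannon_entropy_def sum_negf)
qed

lemma shannon_entropy_lt_hplus:
  assumes "\<exists>u v. p u \<noteq> p v"
  shows "shannon_entropy < hplus"
proof -
  obtain v where "pmin < p v"
  proof -
    obtain u v where "p u \<noteq> p v" using assms by blast
    then have "pmin < p u \<or> pmin < p v" using pmin_le[of u] pmin_le[of v] by linarith
    then show thesis using that by blast
  qed
  have "ln (1 / p u) = - ln (p u)" for u
    using p_pos[of u] by (simp add: ln_div)
  then have "shannon_entropy = (\<Sum>u\<in>UNIV. p u * ln (1 / p u))"
    by (simp add: shannon_entropy_def sum_negf)
  also have "\<dots> < (\<Sum>u\<in>UNIV. p u * ln (1 / pmin))"
  proof (rule sum_strict_mono_ex1)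
    show "\<forall>u\<in>UNIV. p u * ln (1 / p u) \<le> p u * ln (1 / pmin)"
      using p_pos pmin_pos pmin_le by (auto intro!: mult_left_mono simp: ln_div less_imp_le)
    show "\<exists>u\<in>UNIV. p u * ln (1 / p u) < p u * ln (1 / pmin)"
      using \<open>pmin < p v\<close> p_pos[of v] pmin_pos by (intro bexI[of _ v]) (auto simp: ln_div)
  qed simp
  also have "\<dots> = hplus" by (simp add: hplus_def sum_distrib_right[symmetric] sum_p)
  finally show ?thesis .
qed

lemma prod_list_p_pos: "0 < prod_list (map p w)"
  using p_pos by (induction w) auto

lemma prod_list_p_le_1: "prod_list (map p w) \<le> 1"
proof (induction w)
  case (Cons a w)
  show ?case using mult_le_one[OF p_le_1 less_imp_le[OF prod_list_p_pos] Cons.IH] by simp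
qed simp

lemma pmin_power_le_prod_list_p: "pmin ^ length w \<le> prod_list (map p w)"
proof (induction w)
  case (Cons a w)
  show ?case using mult_mono[OF pmin_le Cons.IH] p_pos[of a] pmin_pos by simp
qed simp

lemma sum_prod_list_p: "(\<Sum>w | length w = j. prod_list (map p w)) = 1"
  using sum_prod_list_lists_length[of p j] sum_p by simp

lemma card_likely_words_le:
  "card {w. length w = j \<and> exp (- a * j) \<le> prod_list (map p w)} \<le> exp (a * j)"
proof -
  let ?G = "{w. length w = j \<and> exp (- a * j) \<le> prod_list (map p w)}"
  have "card ?G * exp (- a * j) = (\<Sum>w\<in>?G. exp (- a * j))" by simp
  also have "\<dots> \<le> (\<Sum>w\<in>?G. prod_list (map p w))" by (rule sum_mono) auto
  also have "\<dots> \<le> (\<Sum>w | length w = j. prod_list (map p w))"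
    by (rule sum_mono2[OF finite_lists_length_UNIV]) (auto intro: less_imp_le prod_list_p_pos)
  finally have "card ?G * exp (- a * j) \<le> 1" by (simp add: sum_prod_list_p)
  then show ?thesis by (simp add: exp_minus field_simps)
qed

lemma card_likely_words_upto_le:
  fixes a :: real
  assumes "0 \<le> a"
  shows "card {w. length w \<le> K \<and> exp (- a * length w) \<le> prod_list (map p w)} \<le> (real K + 1) * exp (a * K)"
proof -
  have "{w. length w \<le> K \<and> exp (- a * length w) \<le> prod_list (map p w)}
      = (\<Union>j\<le>K. {w. length w = j \<and> exp (- a * j) \<le> prod_list (map p w)})"
    by auto
  then have "card {w. length w \<le> K \<and> exp (- a * length w) \<le> prod_list (map p w)}
      \<le> (\<Sum>j\<le>K. card {w. length w = j \<and> exp (- a * j) \<le> prod_list (map p w)})"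
    by (simp add: card_UN_le)
  then have "real (card {w. length w \<le> K \<and> exp (- a * length w) \<le> prod_list (map p w)})
      \<le> (\<Sum>j\<le>K. real (card {w. length w = j \<and> exp (- a * j) \<le> prod_list (map p w)}))"
    by (simp only: of_nat_sum[symmetric] of_nat_le_iff)
  also have "\<dots> \<le> (\<Sum>j\<le>K. exp (a * K))"
  proof (rule sum_mono)
    fix j assume "j \<in> {..K}"
    then have "exp (a * j) \<le> exp (a * K)" using assms by (simp add: mult_left_mono)
    then show "card {w. length w = j \<and> exp (- a * j) \<le> prod_list (map p w)} \<le> exp (a * K)"
      using card_likely_words_le[of j a] by linarith
  qed
  finally show ?thesis by (simp add: add.commute)
qed

lemma chernoff_nonneg: "0 \<le> chernoff s a"
  unfolding chernoff_def by (intro mult_nonneg_nonneg sum_nonneg) auto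

text \<open>\<open>chernoff 0 a = 1\<close>, and the derivative of \<open>chernoff s a\<close> at \<open>s = 0\<close> is \<open>shannon_entropy - a\<close>.\<close>
lemma exists_chernoff_lt_1:
  assumes "shannon_entropy < a"
  obtains s where "0 < s" "s < 1" "chernoff s a < 1"
proof -
  let ?g = "\<lambda>s. (\<Sum>u\<in>UNIV. p u * exp (- s * ln (p u))) * exp (- s * a)"
  have "p u powr (1 - s) = p u * exp (- s * ln (p u))" for u s
  proof -
    have "p u powr (1 - s) = exp ((1 - s) * ln (p u))" using p_pos[of u] by (simp add: powr_def)
    also have "\<dots> = p u * exp (- s * ln (p u))"
      using p_pos[of u] by (simp add: algebra_simps exp_diff exp_minus divide_inverse)
    finally show ?thesis .
  qed
  then have g_chernoff: "?g s = chernoff s a" for s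
    by (simp add: chernoff_def)
  have der: "DERIV ?g 0 :> (\<Sum>u\<in>UNIV. p u * (- ln (p u))) * 1 + (\<Sum>u\<in>UNIV. p u) * (- a)"
    by (auto intro!: derivative_eq_intros sum.cong)
  have "(\<Sum>u\<in>UNIV. p u * (- ln (p u))) * 1 + (\<Sum>u\<in>UNIV. p u) * (- a) < 0"
    using assms sum_p by (simp add: shannon_entropy_def sum_negf)
  from DERIV_neg_dec_right[OF der this] obtain d
    where "0 < d" and dec: "\<And>t. 0 < t \<Longrightarrow> t < d \<Longrightarrow> ?g (0 + t) < ?g 0"
    by blast
  define s where "s = min (d / 2) (1 / 2)"
  have "0 < s" "s < d" "s < 1" using \<open>0 < d\<close> by (auto simp: s_def)
  moreover have "?g 0 = 1" using sum_p by simp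
  ultimately show thesis using dec[of s] g_chernoff[of s] by (intro that[of s]) simp_all
qed

text \<open>Chernoff's bound: a word with \<open>P < e\<^sup>-\<^sup>a\<^sup>j\<close> satisfies \<open>P \<le> P\<^sup>1\<^sup>-\<^sup>s e\<^sup>-\<^sup>s\<^sup>a\<^sup>j\<close>.\<close>
lemma sum_unlikely_words_le:
  assumes "0 < s" "s < 1"
  shows "(\<Sum>w | length w = j \<and> prod_list (map p w) < exp (- a * j). prod_list (map p w))
           \<le> chernoff s a ^ j"
proof -
  let ?P = "\<lambda>w. prod_list (map p w)" and ?Q = "\<lambda>w. prod_list (map (\<lambda>u. p u powr (1 - s)) w)"
  have powr_prod: "?P w powr (1 - s) = ?Q w" for w
    using p_pos prod_list_p_pos by (induction w) (auto simp: powr_mult)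
  have "?P w \<le> ?Q w * exp (- s * a * j)" if "?P w < exp (- a * j)" for w
  proof -
    have "?P w = ?P w powr (1 - s) * ?P w powr s"
      using prod_list_p_pos[of w] by (simp add: powr_add[symmetric] abs_of_pos)
    also have "\<dots> \<le> ?P w powr (1 - s) * exp (- a * j) powr s"
      using that prod_list_p_pos[of w] assms by (intro mult_left_mono powr_mono2) auto
    also have "exp (- a * j) powr s = exp (- s * a * j)"
      by (simp add: powr_def)
    finally show ?thesis by (simp add: powr_prod)
  qed
  then have "(\<Sum>w | length w = j \<and> ?P w < exp (- a * j). ?P w)
      \<le> (\<Sum>w | length w = j \<and> ?P w < exp (- a * j). ?Q w * exp (- s * a * j))"
    by (intro sum_mono) auto
  also have "\<dots> \<le> (\<Sum>w | length w = j. ?Q w * exp (- s * a * j))"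
    by (rule sum_mono2[OF finite_lists_length_UNIV]) (auto intro!: mult_nonneg_nonneg prod_list_nonneg)
  also have "\<dots> = (\<Sum>w | length w = j. ?Q w) * exp (- s * a * j)"
    by (simp add: sum_distrib_right)
  also have "\<dots> = (\<Sum>u\<in>UNIV. p u powr (1 - s)) ^ j * exp (- s * a) ^ j"
    by (simp add: sum_prod_list_lists_length exp_of_nat_mult[symmetric] mult.commute)
  also have "\<dots> = chernoff s a ^ j"
    by (simp add: chernoff_def power_mult_distrib)
  finally show ?thesis .
qed

end

section \<open>Independent letters\<close>

lemma UNIV_letter: "(UNIV :: letter set) = {A, C, G, T}"
  using letter.exhaust by auto

instance letter :: finite
  by standard (simp add: UNIV_letter)

lemma card_letter: "CARD(letter) = 4"
  by (simp add: UNIV_letter)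

locale cgr_prob = prob_space M + positive_distribution p
  for M :: "'s measure" and p :: "letter \<Rightarrow> real" +
  fixes U :: "nat \<Rightarrow> 's \<Rightarrow> letter"
  assumes indep: "indep_vars (\<lambda>_. count_space UNIV) U {1..}"
    and distr: "\<And>n u. 1 \<le> n \<Longrightarrow> prob {\<omega> \<in> space M. U n \<omega> = u} = p u"
begin

lemma U_measurable: "1 \<le> i \<Longrightarrow> U i \<in> measurable M (count_space UNIV)"
  using indep by (auto simp: indep_vars_def)

lemma cylinder_in_events:
  assumes "finite J" "J \<subseteq> {1..}"
  shows "{\<omega> \<in> space M. \<forall>i\<in>J. U i \<omega> = f i} \<in> events"
proof (cases "J = {}")
  case False
  have "{\<omega> \<in> space M. \<forall>i\<in>J. U i \<omega> = f i} = (\<Inter>i\<in>J. U i -` {f i} \<inter> space M)"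
    using False by auto
  also have "\<dots> \<in> events"
    using assms False U_measurable by (intro sets.finite_INT measurable_sets) auto
  finally show ?thesis .
qed simp

lemma prob_cylinder:
  assumes "finite J" "J \<subseteq> {1..}"
  shows "prob {\<omega> \<in> space M. \<forall>i\<in>J. U i \<omega> = f i} = (\<Prod>i\<in>J. p (f i))"
proof (cases "J = {}")
  case False
  have "{\<omega> \<in> space M. \<forall>i\<in>J. U i \<omega> = f i} = (\<Inter>i\<in>J. U i -` {f i} \<inter> space M)"
    using False by auto
  also have "prob \<dots> = (\<Prod>i\<in>J. prob (U i -` {f i} \<inter> space M))"
    by (rule indep_varsD[OF indep False assms]) auto
  also have "\<dots> = (\<Prod>i\<in>J. p (f i))"
    using assms distr by (intro prod.cong) (auto simp: vimage_def Int_def conj_commute)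
  finally show ?thesis .
qed (simp add: prob_space)

lemma finitely_determined_in_events:
  assumes "\<And>u v. (\<And>i. 1 \<le> i \<Longrightarrow> i \<le> N \<Longrightarrow> u i = v i) \<Longrightarrow> F u = F v"
  shows "{\<omega> \<in> space M. F (\<lambda>k. U k \<omega>)} \<in> events"
proof -
  let ?S = "{f \<in> {1..N} \<rightarrow>\<^sub>E UNIV. F f}"
  have "{\<omega> \<in> space M. F (\<lambda>k. U k \<omega>)} = (\<Union>f\<in>?S. {\<omega> \<in> space M. \<forall>i\<in>{1..N}. U i \<omega> = f i})"
  proof safe
    fix \<omega> assume \<omega>: "\<omega> \<in> space M" "F (\<lambda>k. U k \<omega>)"
    have "F (restrict (\<lambda>i. U i \<omega>) {1..N}) = F (\<lambda>k. U k \<omega>)" by (rule assms) auto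
    with \<omega> show "\<omega> \<in> (\<Union>f\<in>?S. {\<omega> \<in> space M. \<forall>i\<in>{1..N}. U i \<omega> = f i})"
      by (intro UN_I[of "restrict (\<lambda>i. U i \<omega>) {1..N}"]) auto
  next
    fix \<omega> f assume "f \<in> {1..N} \<rightarrow>\<^sub>E UNIV" "F f" "\<forall>i\<in>{1..N}. U i \<omega> = f i"
    then show "F (\<lambda>k. U k \<omega>)" using assms[of f "\<lambda>k. U k \<omega>"] by auto
  qed
  also have "\<dots> \<in> events"
    by (intro sets.finite_UN finite_subset[OF _ finite_PiE[of "{1..N}" "\<lambda>_. UNIV"]] ballI
        cylinder_in_events) auto
  finally show ?thesis .
qed

text \<open>\<open>\<omega> \<in> prefix_event w m\<close> means \<open>U\<^sub>m \<dots> U\<^sub>m\<^sub>-\<^sub>|\<^sub>w\<^sub>|\<^sub>+\<^sub>1 = w\<close>.\<close>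
definition prefix_event :: "letter list \<Rightarrow> nat \<Rightarrow> 's set" where
  "prefix_event w m = {\<omega> \<in> space M. take (length w) (cgr_word (\<lambda>k. U k \<omega>) m) = w}"

lemma length_le_if_in_prefix_event: "\<omega> \<in> prefix_event w m \<Longrightarrow> length w \<le> m"
proof -
  assume "\<omega> \<in> prefix_event w m"
  then have "length (take (length w) (cgr_word (\<lambda>k. U k \<omega>) m)) = length w"
    by (simp add: prefix_event_def)
  then show ?thesis by (simp add: min_def split: if_splits)
qed

lemma prefix_event_eq_cylinder:
  assumes "length w \<le> m"
  shows "prefix_event w m = {\<omega> \<in> space M. \<forall>i\<in>{m - length w<..m}. U i \<omega> = w ! (m - i)}"
proof -
  have "take (length w) (cgr_word (\<lambda>k. U k \<omega>) m) = w \<longleftrightarrow> (\<forall>i<length w. U (m - i) \<omega> = w ! i)" for \<omega>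
    using assms by (simp add: list_eq_iff_nth_eq nth_cgr_word)
  also have "(\<forall>i<length w. U (m - i) \<omega> = w ! i) \<longleftrightarrow> (\<forall>i\<in>{m - length w<..m}. U i \<omega> = w ! (m - i))" for \<omega>
  proof
    assume H: "\<forall>i<length w. U (m - i) \<omega> = w ! i"
    show "\<forall>i\<in>{m - length w<..m}. U i \<omega> = w ! (m - i)"
    proof
      fix i assume "i \<in> {m - length w<..m}"
      then have "m - i < length w" "m - (m - i) = i" by auto
      then show "U i \<omega> = w ! (m - i)" using H by metis
    qed
  next
    assume H: "\<forall>i\<in>{m - length w<..m}. U i \<omega> = w ! (m - i)"
    show "\<forall>i<length w. U (m - i) \<omega> = w ! i"
    proof (intro allI impI)
      fix i assume "i < length w"
      then have "m - i \<in> {m - length w<..m}" "m - (m - i) = i" using assms by auto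
      then show "U (m - i) \<omega> = w ! i" using H by metis
    qed
  qed
  finally show ?thesis by (simp add: prefix_event_def)
qed

lemma prefix_event_in_events: "length w \<le> m \<Longrightarrow> prefix_event w m \<in> events"
  unfolding prefix_event_eq_cylinder by (rule cylinder_in_events) auto

lemma prod_window_eq_prod_list:
  assumes "length w \<le> m"
  shows "(\<Prod>i\<in>{m - length w<..m}. p (w ! (m - i))) = prod_list (map p w)"
proof -
  have "(\<Prod>i\<in>{m - length w<..m}. p (w ! (m - i))) = (\<Prod>i<length w. p (w ! i))"
    by (rule prod.reindex_bij_witness[where i = "\<lambda>i. m - i" and j = "\<lambda>i. m - i"]) (use assms in auto)
  also have "\<dots> = prod_list (map p w)"
    by (simp add: prod.list_conv_set_nth atLeast0LessThan)
  finally show ?thesis .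
qed

lemma prob_prefix_event: "length w \<le> m \<Longrightarrow> prob (prefix_event w m) = prod_list (map p w)"
  unfolding prefix_event_eq_cylinder
  by (subst prob_cylinder) (auto simp: prod_window_eq_prod_list)

lemma prob_avoid_disjoint_windows:
  assumes "0 < R" and len: "\<And>r. r < R \<Longrightarrow> length w \<le> m r"
    and disj: "disjoint_family_on (\<lambda>r. {m r - length w<..m r}) {..<R}"
  shows "prob {\<omega> \<in> space M. \<forall>r<R. \<omega> \<notin> prefix_event w (m r)} = (1 - prod_list (map p w)) ^ R"
proof -
  define K where "K r = {m r - length w<..m r}" for r
  let ?X = "\<lambda>r \<omega>. restrict (\<lambda>i. U i \<omega>) (K r)"
  let ?A = "\<lambda>r. (K r \<rightarrow>\<^sub>E UNIV) - (\<Pi>\<^sub>E i\<in>K r. {w ! (m r - i)})"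
  have ind: "indep_vars (\<lambda>r. \<Pi>\<^sub>M i\<in>K r. count_space UNIV) ?X {..<R}"
    using disj len by (intro indep_vars_restrict[OF indep]) (auto simp: K_def)
  have A: "?A r \<in> sets (\<Pi>\<^sub>M i\<in>K r. count_space UNIV)" for r
    by (intro sets.Diff sets_PiM_I_finite) (auto simp: K_def simp flip: space_PiM)
  have pre: "?X r -` ?A r \<inter> space M = space M - prefix_event w (m r)" if "r < R" for r
    using len[OF that] by (auto simp: prefix_event_eq_cylinder K_def PiE_iff)
  have "{\<omega> \<in> space M. \<forall>r<R. \<omega> \<notin> prefix_event w (m r)} = (\<Inter>r\<in>{..<R}. ?X r -` ?A r \<inter> space M)"
    using \<open>0 < R\<close> by (auto simp: pre)
  also have "prob \<dots> = (\<Prod>r<R. prob (?X r -` ?A r \<inter> space M))"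
    using \<open>0 < R\<close> A by (intro indep_varsD[OF ind]) auto
  also have "\<dots> = (\<Prod>r<R. 1 - prod_list (map p w))"
    using len by (intro prod.cong) (auto simp: pre prob_compl prefix_event_in_events prob_prefix_event)
  finally show ?thesis by simp
qed

lemma cgr_D_le_in_events:
  fixes x :: real
  shows "{\<omega> \<in> space M. cgr_D (\<lambda>k. U k \<omega>) m \<le> x} \<in> events"
proof (rule finitely_determined_in_events)
  fix u v :: "nat \<Rightarrow> letter" assume "\<And>i. 1 \<le> i \<Longrightarrow> i \<le> m \<Longrightarrow> u i = v i"
  then have "cgr_D u m = cgr_D v m" by (rule cgr_D_cong)
  then show "(cgr_D u m \<le> x) = (cgr_D v m \<le> x)" by simp
qed

lemma missing_short_word_in_events:
  "{\<omega> \<in> space M. \<exists>x. length x \<le> k \<and> x \<notin> cgr_tree (\<lambda>i. U i \<omega>) n} \<in> events"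
  by (rule finitely_determined_in_events[where N = n]) (metis cgr_tree_cong)

section \<open>The liminf is at least \<open>1 / h\<^sub>+\<close>\<close>

definition stage_miss_event :: "nat \<Rightarrow> letter list \<Rightarrow> 's set" where
  "stage_miss_event L w =
     {\<omega> \<in> space M. \<forall>r < L div length w. \<omega> \<notin> prefix_event w (stage_end L (length w) r)}"

lemma stage_miss_event_in_events: "stage_miss_event L w \<in> events"
proof -
  have "stage_miss_event L w = space M - (\<Union>r<L div length w. prefix_event w (stage_end L (length w) r))"
    by (auto simp: stage_miss_event_def)
  also have "\<dots> \<in> events"
    by (intro sets.Diff sets.top sets.finite_UN) (auto intro: prefix_event_in_events simp: stage_end_def)
  finally show ?thesis .
qed

lemma prob_stage_miss_event_le:
  fixes k L :: nat
  assumes "1 \<le> length w" "length w \<le> k" "k \<le> L"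
  shows "prob (stage_miss_event L w) \<le> exp (- (pmin ^ k) * (L div k))"
proof -
  let ?j = "length w" and ?P = "prod_list (map p w)"
  have R: "0 < L div ?j" using assms by (simp add: div_greater_zero_iff Suc_le_eq)
  have "prob (stage_miss_event L w) = (1 - ?P) ^ (L div ?j)"
    unfolding stage_miss_event_def using disjoint_stage_windows by (intro prob_avoid_disjoint_windows R) (auto simp: stage_end_def)
  also have "\<dots> \<le> exp (- ?P * (L div ?j))"
    using prod_list_p_pos prod_list_p_le_1 by (intro one_minus_power_le_exp) (auto intro: less_imp_le)
  also have "\<dots> \<le> exp (- (pmin ^ k) * (L div k))"
  proof -
    have "pmin ^ k \<le> pmin ^ ?j"
      using assms pmin_pos pmin_lt_1 by (intro power_decreasing) auto
    also have "\<dots> \<le> ?P" by (rule pmin_power_le_prod_list_p)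
    finally have "pmin ^ k * (L div k) \<le> ?P * (L div ?j)"
      using assms div_le_mono2[of ?j k L] prod_list_p_pos[of w] by (intro mult_mono) (auto simp: Suc_le_eq)
    then show ?thesis by simp
  qed
  finally show ?thesis .
qed

lemma short_word_missing_subset:
  assumes "k * L \<le> n"
  shows "{\<omega> \<in> space M. \<exists>x. length x \<le> k \<and> x \<notin> cgr_tree (\<lambda>i. U i \<omega>) n}
           \<subseteq> (\<Union>w \<in> {w. 1 \<le> length w \<and> length w \<le> k}. stage_miss_event L w)"
proof safe
  fix \<omega> x assume \<omega>: "\<omega> \<in> space M" "length x \<le> k" "x \<notin> cgr_tree (\<lambda>i. U i \<omega>) n"
  show "\<omega> \<in> (\<Union>w \<in> {w. 1 \<le> length w \<and> length w \<le> k}. stage_miss_event L w)"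
  proof (rule ccontr)
    assume miss: "\<omega> \<notin> (\<Union>w \<in> {w. 1 \<le> length w \<and> length w \<le> k}. stage_miss_event L w)"
    have "\<exists>r < L div j. take j (cgr_word (\<lambda>i. U i \<omega>) (stage_end L j r)) = w"
      if j: "1 \<le> j" "j \<le> k" "length w = j" for j w
    proof -
      have "\<omega> \<notin> stage_miss_event L w" using miss j by auto
      then obtain r where "r < L div j" "\<omega> \<in> prefix_event w (stage_end L j r)"
        using \<omega>(1) j(3) by (auto simp: stage_miss_event_def)
      then show ?thesis using j(3) by (auto simp: prefix_event_def)
    qed
    then show False using short_words_in_cgr_tree_if_stages_hit \<omega> assms by blast
  qed
qed

lemma prob_short_word_missing_le:
  fixes k L n :: nat
  assumes "1 \<le> k" "k \<le> L" "k * L \<le> n"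
  shows "prob {\<omega> \<in> space M. \<exists>x. length x \<le> k \<and> x \<notin> cgr_tree (\<lambda>i. U i \<omega>) n}
           \<le> real k * 4 ^ k * exp (- (pmin ^ k) * (L div k))"
proof -
  let ?I = "{w :: letter list. 1 \<le> length w \<and> length w \<le> k}"
  have fin: "finite ?I" by (rule finite_subset[OF _ finite_lists_length_le_UNIV[of k]]) auto
  have "prob {\<omega> \<in> space M. \<exists>x. length x \<le> k \<and> x \<notin> cgr_tree (\<lambda>i. U i \<omega>) n}
      \<le> prob (\<Union>w\<in>?I. stage_miss_event L w)"
    using fin short_word_missing_subset[OF assms(3)]
    by (intro finite_measure_mono) (auto intro: stage_miss_event_in_events)
  also have "\<dots> \<le> (\<Sum>w\<in>?I. prob (stage_miss_event L w))"
    using fin by (intro finite_measure_subadditive_finite) (auto intro: stage_miss_event_in_events)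
  also have "\<dots> \<le> (\<Sum>w\<in>?I. exp (- (pmin ^ k) * (L div k)))"
    using assms by (intro sum_mono prob_stage_miss_event_le) auto
  also have "\<dots> \<le> real k * 4 ^ k * exp (- (pmin ^ k) * (L div k))"
  proof -
    have "real (card ?I) \<le> real (k * 4 ^ k)"
      using card_lists_length_between_le[where 'a = letter, of k] by (simp only: of_nat_le_iff card_letter)
    then show ?thesis by (simp add: mult_right_mono)
  qed
  finally show ?thesis .
qed

text \<open>The bound of \<open>prob_short_word_missing_le\<close> for \<open>L = (n - 1) div k\<close>, made explicit in \<open>n\<close>.\<close>
lemma short_word_missing_bound_le:
  fixes k n :: nat
  assumes "1 \<le> k" "real k \<le> b * ln n" "2 \<le> n"
  shows "real k * 4 ^ k * exp (- (pmin ^ k) * ((n - 1) div k div k))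
           \<le> b * ln n * n powr (b * ln 4) * exp (- (n powr - (b * hplus)) * ((real n - 1) / (b * ln n)\<^sup>2 - 1))"
proof -
  have "1 \<le> b * ln n" using assms by (simp add: order_trans[of 1 "real k"])
  have four: "(4::real) ^ k \<le> n powr (b * ln 4)"
  proof -
    have "(4::real) ^ k = 4 powr k" by (simp add: powr_realpow)
    also have "\<dots> \<le> 4 powr (b * ln n)" using assms by (intro powr_mono) auto
    also have "\<dots> = n powr (b * ln 4)" using assms by (simp add: powr_def)
    finally show ?thesis .
  qed
  have rate: "n powr - (b * hplus) \<le> pmin ^ k"
  proof -
    have "n powr - (b * hplus) = pmin powr (b * ln n)"
      using assms pmin_pos by (simp add: powr_def ln_pmin)
    also have "\<dots> \<le> pmin powr k" using assms pmin_pos pmin_lt_1 by (intro powr_mono') auto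
    also have "\<dots> = pmin ^ k" using pmin_pos by (simp add: powr_realpow)
    finally show ?thesis .
  qed
  have stages: "(real n - 1) / (b * ln n)\<^sup>2 - 1 \<le> real ((n - 1) div k div k)"
  proof -
    have "(real n - 1) / (b * ln n)\<^sup>2 \<le> real (n - 1) / real (k * k)"
      using assms by (simp add: of_nat_diff power2_eq_square frac_le mult_mono)
    also have "\<dots> - 1 \<le> real ((n - 1) div k div k)"
      using real_of_nat_div_ge[of "n - 1" "k * k"] by (simp add: div_mult2_eq)
    finally show ?thesis by simp
  qed
  have "n powr - (b * hplus) * ((real n - 1) / (b * ln n)\<^sup>2 - 1) \<le> pmin ^ k * ((n - 1) div k div k)"
    using rate stages pmin_pos
    by (meson mult_left_mono mult_right_mono of_nat_0_le_iff order_trans powr_ge_zero)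
  then have exp_le: "exp (- (pmin ^ k) * ((n - 1) div k div k))
      \<le> exp (- (n powr - (b * hplus)) * ((real n - 1) / (b * ln n)\<^sup>2 - 1))"
    by simp
  have "real k * 4 ^ k \<le> b * ln n * n powr (b * ln 4)"
    using assms four by (intro mult_mono) auto
  then show ?thesis
    by (rule mult_mono[OF _ exp_le]) (use \<open>1 \<le> b * ln n\<close> in auto)
qed

lemma eventually_prob_short_word_missing_le:
  assumes "0 < b" "b * hplus < 1"
  shows "\<forall>\<^sub>F n in sequentially.
           prob {\<omega> \<in> space M. \<exists>x. length x \<le> nat \<lfloor>b * ln n\<rfloor> \<and> x \<notin> cgr_tree (\<lambda>i. U i \<omega>) (n - 1)}
             \<le> 1 / real n ^ 2"
proof -
  define g where "g = b * hplus"
  have "0 < g" "g < 1" using assms hplus_pos by (simp_all add: g_def)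
  define f where "f n = b * ln n * n powr (b * ln 4) * exp (- (n powr - g) * ((n - 1) / (b * ln n)\<^sup>2 - 1))"
    for n :: real
  have "((\<lambda>n::nat. real n ^ 2 * f n) \<longlongrightarrow> 0) at_top"
    unfolding f_def using \<open>0 < b\<close> \<open>0 < g\<close> \<open>g < 1\<close> by real_asymp
  then have "\<forall>\<^sub>F n in sequentially. real n ^ 2 * f n < 1"
    by (rule order_tendstoD) simp
  moreover have "\<forall>\<^sub>F n in sequentially. 1 \<le> b * ln (real n)"
    using \<open>0 < b\<close> by real_asymp
  moreover have "\<forall>\<^sub>F n in sequentially. (b * ln (real n))\<^sup>2 \<le> real n - 1"
    using \<open>0 < b\<close> by real_asymp
  moreover have "\<forall>\<^sub>F n in sequentially. 2 \<le> n"
    by (rule eventually_ge_at_top)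
  ultimately show ?thesis
  proof eventually_elim
    case (elim n)
    define k where "k = nat \<lfloor>b * ln n\<rfloor>"
    have k: "1 \<le> k" "real k \<le> b * ln n" using elim by (auto simp: k_def le_nat_floor)
    then have "real k * real k \<le> (b * ln n)\<^sup>2"
      unfolding power2_eq_square by (intro mult_mono) auto
    then have "real (k * k) \<le> real (n - 1)"
      using elim by (simp add: of_nat_diff)
    then have "k * k \<le> n - 1" by (simp only: of_nat_le_iff)
    then have "k \<le> (n - 1) div k" "k * ((n - 1) div k) \<le> n - 1"
      using k by (simp_all add: less_eq_div_iff_mult_less_eq)
    then have "prob {\<omega> \<in> space M. \<exists>x. length x \<le> k \<and> x \<notin> cgr_tree (\<lambda>i. U i \<omega>) (n - 1)}
        \<le> real k * 4 ^ k * exp (- (pmin ^ k) * ((n - 1) div k div k))"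
      using k by (intro prob_short_word_missing_le)
    also have "\<dots> \<le> f n"
      unfolding f_def g_def using k elim by (intro short_word_missing_bound_le) auto
    also have "\<dots> \<le> 1 / real n ^ 2"
      using elim by (simp add: field_simps)
    finally show ?case by (simp add: k_def)
  qed
qed

lemma AE_eventually_short_words_in_cgr_tree:
  assumes "0 < b" "b * hplus < 1"
  shows "AE \<omega> in M. \<forall>\<^sub>F n in sequentially.
           \<forall>x. length x \<le> nat \<lfloor>b * ln n\<rfloor> \<longrightarrow> x \<in> cgr_tree (\<lambda>i. U i \<omega>) (n - 1)"
proof -
  define B where "B n = {\<omega> \<in> space M. \<exists>x. length x \<le> nat \<lfloor>b * ln n\<rfloor> \<and> x \<notin> cgr_tree (\<lambda>i. U i \<omega>) (n - 1)}"
    for n :: nat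
  have "summable (\<lambda>n. prob (B n))"
  proof (rule summable_comparison_test_ev)
    show "\<forall>\<^sub>F n in sequentially. norm (prob (B n)) \<le> inverse (real n ^ 2)"
      using eventually_prob_short_word_missing_le[OF assms] by (simp add: B_def inverse_eq_divide)
  qed (rule inverse_power_summable, simp)
  then have "AE \<omega> in M. \<forall>\<^sub>F n in sequentially. \<omega> \<in> space M - B n"
    by (intro borel_cantelli_AE1) (auto simp: B_def missing_short_word_in_events emeasure_eq_measure)
  then show ?thesis
    by eventually_elim (auto simp: B_def elim: eventually_mono)
qed

lemma AE_eventually_cgr_D_ge:
  assumes "0 < b" "b * hplus < 1"
  shows "AE \<omega> in M. \<forall>\<^sub>F n in sequentially. b \<le> cgr_D (\<lambda>k. U k \<omega>) n / ln n"
  using AE_eventually_short_words_in_cgr_tree[OF assms]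
proof eventually_elim
  case (elim \<omega>)
  then show ?case
  proof (rule eventually_elim2[OF _ eventually_ge_at_top[of 2]])
    fix n :: nat
    assume "\<forall>x. length x \<le> nat \<lfloor>b * ln n\<rfloor> \<longrightarrow> x \<in> cgr_tree (\<lambda>i. U i \<omega>) (n - 1)" "2 \<le> n"
    then have "nat \<lfloor>b * ln n\<rfloor> < cgr_D (\<lambda>k. U k \<omega>) n"
      by (intro cgr_D_gt_if_short_words_in_cgr_tree) auto
    then have "b * ln n < cgr_D (\<lambda>k. U k \<omega>) n" by linarith
    moreover have "0 < ln (real n)" using \<open>2 \<le> n\<close> by simp
    ultimately show "b \<le> cgr_D (\<lambda>k. U k \<omega>) n / ln n" by (simp add: field_simps)
  qed
qed

section \<open>The liminf is at most \<open>1 / h\<^sub>+\<close>\<close>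

lemma AE_every_word_occurs:
  "AE \<omega> in M. \<forall>w. \<exists>m \<ge> length w. take (length w) (cgr_word (\<lambda>k. U k \<omega>) m) = w"
proof -
  define b where "b = 1 / (2 * hplus)"
  have b: "0 < b" "b * hplus < 1" using hplus_pos by (auto simp: b_def)
  have "filterlim (\<lambda>n::nat. b * ln n) at_top at_top" using b by real_asymp
  then have large: "\<forall>\<^sub>F n in sequentially. real (length w) \<le> b * ln n" for w
    by (simp add: filterlim_at_top)
  show ?thesis
    using AE_eventually_short_words_in_cgr_tree[OF b]
  proof eventually_elim
    case (elim \<omega>)
    show ?case
    proof
      fix w :: "letter list"
      show "\<exists>m \<ge> length w. take (length w) (cgr_word (\<lambda>k. U k \<omega>) m) = w"
      proof (cases "w = []")
        case False
        obtain n where "real (length w) \<le> b * ln n"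
          "\<forall>x. length x \<le> nat \<lfloor>b * ln n\<rfloor> \<longrightarrow> x \<in> cgr_tree (\<lambda>i. U i \<omega>) (n - 1)"
          using eventually_happens'[OF sequentially_bot eventually_conj[OF large[of w] elim]] by blast
        then have "w \<in> cgr_tree (\<lambda>i. U i \<omega>) (n - 1)" by (simp add: le_nat_floor)
        with False show ?thesis by (auto elim: cgr_tree_node_inserted)
      qed simp
    qed
  qed
qed

lemma prob_early_replicate_le:
  fixes g :: real
  assumes "1 \<le> j" "p a = pmin"
  shows "prob (\<Union>m\<in>{j..nat \<lfloor>pmin powr (- g * j)\<rfloor>}. prefix_event (replicate j a) m)
           \<le> (pmin powr (1 - g)) ^ j"
proof -
  let ?N = "nat \<lfloor>pmin powr (- g * j)\<rfloor>"
  have "prob (\<Union>m\<in>{j..?N}. prefix_event (replicate j a) m)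
      \<le> (\<Sum>m\<in>{j..?N}. prob (prefix_event (replicate j a) m))"
    by (intro finite_measure_subadditive_finite) (auto intro: prefix_event_in_events)
  also have "\<dots> = card {j..?N} * pmin ^ j"
    using assms by (simp add: prob_prefix_event)
  also have "\<dots> \<le> pmin powr (- g * j) * pmin ^ j"
  proof -
    have "card {j..?N} \<le> ?N" using assms by simp
    then have "real (card {j..?N}) \<le> pmin powr (- g * j)"
      by (meson of_nat_floor of_nat_le_iff order_trans powr_ge_zero)
    then show ?thesis using pmin_pos by (intro mult_right_mono) auto
  qed
  also have "\<dots> = (pmin powr (1 - g)) ^ j"
    using pmin_pos by (simp add: powr_realpow[symmetric] powr_powr powr_add[symmetric] algebra_simps)
  finally show ?thesis .
qed

lemma AE_eventually_no_early_replicate: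
  fixes g :: real
  assumes "0 < g" "g < 1" "p a = pmin"
  shows "AE \<omega> in M. \<forall>\<^sub>F j in sequentially.
           \<forall>m. real m \<le> pmin powr (- g * j) \<longrightarrow> \<omega> \<notin> prefix_event (replicate j a) m"
proof -
  define E where "E j = (\<Union>m\<in>{j..nat \<lfloor>pmin powr (- g * j)\<rfloor>}. prefix_event (replicate j a) m)" for j
  have E: "E j \<in> events" for j
    unfolding E_def by (intro sets.finite_UN) (auto intro: prefix_event_in_events)
  have "pmin powr (1 - g) < 1"
    using assms pmin_pos pmin_lt_1 by (simp add: powr_def mult_pos_neg)
  then have "summable (\<lambda>j. prob (E j))"
    unfolding E_def using assms(3) prob_early_replicate_le
    by (intro summable_comparison_test'[OF summable_geometric[of "pmin powr (1 - g)"], where N = 1]) auto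
  then have AE_E: "AE \<omega> in M. \<forall>\<^sub>F j in sequentially. \<omega> \<in> space M - E j"
    by (intro borel_cantelli_AE1 E) (simp add: emeasure_eq_measure)
  have avoid: "\<forall>m. real m \<le> pmin powr (- g * j) \<longrightarrow> \<omega> \<notin> prefix_event (replicate j a) m"
    if "\<omega> \<in> space M - E j" for \<omega> j
  proof (intro allI impI notI)
    fix m assume "real m \<le> pmin powr (- g * j)" "\<omega> \<in> prefix_event (replicate j a) m"
    moreover from this(2) have "j \<le> m" using length_le_if_in_prefix_event by fastforce
    ultimately have "\<omega> \<in> E j" unfolding E_def by (auto intro!: bexI[of _ m] le_nat_floor)
    then show False using that by simp
  qed
  from AE_E show ?thesis
    by eventually_elim (erule eventually_mono, rule avoid)
qed

lemma first_late_occurrence: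
  fixes T :: real
  assumes "1 \<le> length w" "length w \<le> m" "take (length w) (cgr_word u m) = w"
    and late: "\<And>m. real m \<le> T \<Longrightarrow> take (length w) (cgr_word u m) \<noteq> w"
  shows "\<exists>n \<ge> length w. T < n \<and> cgr_D u n \<le> length w"
proof -
  let ?occ = "\<lambda>m. length w \<le> m \<and> take (length w) (cgr_word u m) = w"
  define n where "n = (LEAST m. ?occ m)"
  have occ: "?occ n"
    unfolding n_def by (rule LeastI[of ?occ m]) (use assms in simp)
  have "cgr_D u n \<le> length w"
  proof (rule cgr_D_le_at_first_occurrence)
    fix m' assume "m' < n" "length w \<le> m'"
    then show "take (length w) (cgr_word u m') \<noteq> w"
      using not_less_Least[of m' ?occ] by (simp add: n_def)
  qed (use assms occ in auto)
  moreover have "T < n" using late[of n] occ by force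
  ultimately show ?thesis using occ by blast
qed

lemma div_ln_le_if_late:
  fixes g :: real and j n d :: nat
  assumes "0 < g" "1 \<le> j" "pmin powr (- g * j) < n" "d \<le> j"
  shows "d / ln n \<le> 1 / (g * hplus)"
proof -
  have "0 < pmin powr (- g * j)" using pmin_pos by simp
  with assms(3) have "ln (pmin powr (- g * j)) < ln n"
    by (subst ln_less_cancel_iff) linarith+
  then have "g * j * hplus < ln n" using pmin_pos by (simp add: ln_powr ln_pmin)
  moreover have "0 < g * j * hplus" using assms hplus_pos by simp
  ultimately have "d / ln n \<le> j / (g * j * hplus)"
    using assms(4) by (intro frac_le) simp_all
  also have "\<dots> = 1 / (g * hplus)" using assms(2) by simp
  finally show ?thesis .
qed

lemma AE_frequently_cgr_D_le:
  fixes g :: real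
  assumes "0 < g" "g < 1"
  shows "AE \<omega> in M. \<exists>\<^sub>F n in sequentially. cgr_D (\<lambda>k. U k \<omega>) n / ln n \<le> 1 / (g * hplus)"
proof -
  obtain a where a: "p a = pmin" by (rule pmin_attained)
  show ?thesis
    using AE_space AE_every_word_occurs AE_eventually_no_early_replicate[OF assms a]
  proof eventually_elim
    case (elim \<omega>)
    obtain J where J: "\<And>j m. J \<le> j \<Longrightarrow> real m \<le> pmin powr (- g * j) \<Longrightarrow>
        \<omega> \<notin> prefix_event (replicate j a) m"
      using elim(3) unfolding eventually_sequentially by blast
    show ?case
      unfolding frequently_sequentially
    proof
      fix N :: nat
      define j where "j = max N (max J 1)"
      obtain m where "j \<le> m" "take j (cgr_word (\<lambda>k. U k \<omega>) m) = replicate j a"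
        using elim(2)[rule_format, of "replicate j a"] by auto
      then have "length (replicate j a) \<le> m" "take (length (replicate j a)) (cgr_word (\<lambda>k. U k \<omega>) m) = replicate j a"
        by simp_all
      moreover have "take j (cgr_word (\<lambda>k. U k \<omega>) m') \<noteq> replicate j a"
        if "real m' \<le> pmin powr (- g * j)" for m'
        using J[of j m'] that elim(1) by (auto simp: j_def prefix_event_def)
      ultimately have "\<exists>n \<ge> length (replicate j a). pmin powr (- g * j) < n \<and>
          cgr_D (\<lambda>k. U k \<omega>) n \<le> length (replicate j a)"
        by (intro first_late_occurrence) (auto simp: j_def)
      then obtain n where n: "j \<le> n" "pmin powr (- g * j) < n" "cgr_D (\<lambda>k. U k \<omega>) n \<le> j"
        by auto
      have "cgr_D (\<lambda>k. U k \<omega>) n / ln n \<le> 1 / (g * hplus)"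
        using div_ln_le_if_late[OF assms(1) _ n(2,3)] by (simp add: j_def)
      moreover have "N \<le> n" using n(1) by (simp add: j_def)
      ultimately show "\<exists>n \<ge> N. cgr_D (\<lambda>k. U k \<omega>) n / ln n \<le> 1 / (g * hplus)"
        by blast
    qed
  qed
qed

section \<open>The limsup is at least \<open>1 / h\<close>\<close>

definition unlikely_prefixes :: "real \<Rightarrow> nat \<Rightarrow> nat \<Rightarrow> (nat \<Rightarrow> letter) \<Rightarrow> (nat \<times> nat) set" where
  "unlikely_prefixes a J n u = {(m, j). 1 \<le> m \<and> m \<le> n \<and> J < j \<and> j \<le> m \<and>
     prod_list (map p (take j (cgr_word u m))) < exp (- a * j)}"

lemma finite_unlikely_prefixes: "finite (unlikely_prefixes a J n u)"
  by (rule finite_subset[of _ "{..n} \<times> {..n}"]) (auto simp: unlikely_prefixes_def)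

lemma unlikely_prefixes_cong:
  assumes "\<And>i. 1 \<le> i \<Longrightarrow> i \<le> n \<Longrightarrow> u i = v i"
  shows "unlikely_prefixes a J n u = unlikely_prefixes a J n v"
proof -
  have "cgr_word u m = cgr_word v m" if "m \<le> n" for m
    using assms that by (intro cgr_word_cong) auto
  then show ?thesis by (auto simp: unlikely_prefixes_def)
qed

lemma many_unlikely_prefixes_in_events:
  fixes x :: real
  shows "{\<omega> \<in> space M. x \<le> card (unlikely_prefixes a J n (\<lambda>k. U k \<omega>))} \<in> events"
proof (rule finitely_determined_in_events)
  fix u v :: "nat \<Rightarrow> letter" assume "\<And>i. 1 \<le> i \<Longrightarrow> i \<le> n \<Longrightarrow> u i = v i"
  then have "unlikely_prefixes a J n u = unlikely_prefixes a J n v" by (rule unlikely_prefixes_cong)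
  then show "(x \<le> card (unlikely_prefixes a J n u)) = (x \<le> card (unlikely_prefixes a J n v))" by simp
qed

text \<open>A node of \<open>T\<^sub>n\<close> is short, or a likely word of length at most \<open>K\<close>, or an unlikely
  prefix inserted at some time \<open>m \<le> n\<close>.\<close>
lemma card_cgr_tree_le_unlikely:
  assumes "0 \<le> a" and D: "\<And>m. 1 \<le> m \<Longrightarrow> m \<le> n \<Longrightarrow> cgr_D u m \<le> K"
  shows "real n + 1 \<le> card {x :: letter list. length x \<le> J} + (real K + 1) * exp (a * K)
           + card (unlikely_prefixes a J n u)"
proof -
  let ?A1 = "{x :: letter list. length x \<le> J}"
  let ?A2 = "{x. length x \<le> K \<and> exp (- a * length x) \<le> prod_list (map p x)}"
  let ?A3 = "(\<lambda>(m, j). take j (cgr_word u m)) ` unlikely_prefixes a J n u"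
  have "cgr_tree u n \<subseteq> ?A1 \<union> ?A2 \<union> ?A3"
  proof
    fix x assume x: "x \<in> cgr_tree u n"
    show "x \<in> ?A1 \<union> ?A2 \<union> ?A3"
    proof (cases "length x \<le> J")
      case False
      then have "x \<noteq> []" by auto
      with x obtain m where m: "1 \<le> m" "m \<le> n" "length x = cgr_D u m" "length x \<le> m"
          "take (length x) (cgr_word u m) = x"
        by (rule cgr_tree_node_inserted)
      show ?thesis
      proof (cases "exp (- a * length x) \<le> prod_list (map p x)")
        case True
        then show ?thesis using D[OF m(1,2)] m(3) by simp
      next
        case False
        then have "(m, length x) \<in> unlikely_prefixes a J n u"
          using m \<open>\<not> length x \<le> J\<close> by (simp add: unlikely_prefixes_def)
        then show ?thesis using m(5) by (auto intro!: image_eqI[of _ _ "(m, length x)"])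
      qed
    qed simp
  qed
  then have "card (cgr_tree u n) \<le> card (?A1 \<union> ?A2 \<union> ?A3)"
    using finite_unlikely_prefixes
    by (intro card_mono) (auto intro: finite_subset[of _ "{x. length x \<le> K}"])
  also have "\<dots> \<le> card ?A1 + card ?A2 + card ?A3"
    using card_Un_le[of "?A1 \<union> ?A2" ?A3] card_Un_le[of ?A1 ?A2] by linarith
  finally have "n + 1 \<le> card ?A1 + card ?A2 + card ?A3" by (simp add: card_cgr_tree)
  moreover have "card ?A3 \<le> card (unlikely_prefixes a J n u)"
    using finite_unlikely_prefixes by (rule card_image_le)
  moreover have "card ?A2 \<le> (real K + 1) * exp (a * K)"
    using \<open>0 \<le> a\<close> by (rule card_likely_words_upto_le)
  ultimately show ?thesis by linarith
qed

definition unlikely_prefix_event :: "real \<Rightarrow> nat \<Rightarrow> nat \<Rightarrow> 's set" where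
  "unlikely_prefix_event a m j =
     {\<omega> \<in> space M. prod_list (map p (take j (cgr_word (\<lambda>k. U k \<omega>) m))) < exp (- a * j)}"

lemma unlikely_prefix_event_eq:
  assumes "j \<le> m"
  shows "unlikely_prefix_event a m j
           = (\<Union>w \<in> {w. length w = j \<and> prod_list (map p w) < exp (- a * j)}. prefix_event w m)"
  using assms by (auto simp: unlikely_prefix_event_def prefix_event_def)

lemma unlikely_prefix_event_in_events: "j \<le> m \<Longrightarrow> unlikely_prefix_event a m j \<in> events"
  unfolding unlikely_prefix_event_eq
  by (intro sets.finite_UN prefix_event_in_events finite_subset[OF _ finite_lists_length_UNIV[of j]]) auto

lemma prob_unlikely_prefix_event_le:
  assumes "j \<le> m" "0 < s" "s < 1"
  shows "prob (unlikely_prefix_event a m j) \<le> chernoff s a ^ j"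
proof -
  let ?B = "{w. length w = j \<and> prod_list (map p w) < exp (- a * j)}"
  have fin: "finite ?B" by (rule finite_subset[OF _ finite_lists_length_UNIV[of j]]) auto
  have "prob (\<Union>w\<in>?B. prefix_event w m) \<le> (\<Sum>w\<in>?B. prob (prefix_event w m))"
    using fin assms by (intro finite_measure_subadditive_finite) (auto intro: prefix_event_in_events)
  also have "\<dots> = (\<Sum>w\<in>?B. prod_list (map p w))"
    using assms by (intro sum.cong) (auto simp: prob_prefix_event)
  also have "\<dots> \<le> chernoff s a ^ j"
    using assms by (intro sum_unlikely_words_le)
  finally show ?thesis
    by (simp only: unlikely_prefix_event_eq[OF assms(1)])
qed

lemma prob_many_unlikely_prefixes_le:
  assumes "0 < s" "s < 1" "chernoff s a < 1" "1 \<le> n"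
  shows "prob {\<omega> \<in> space M. n / 2 \<le> card (unlikely_prefixes a J n (\<lambda>k. U k \<omega>))}
           \<le> 2 * chernoff s a ^ Suc J / (1 - chernoff s a)"
proof -
  define S where "S = (SIGMA m:{1..n}. {J<..m})"
  define B where "B = (\<lambda>(m, j). unlikely_prefix_event a m j)"
  have B: "B mj \<in> events" if "mj \<in> S" for mj
    using that by (cases mj) (auto simp: S_def B_def intro: unlikely_prefix_event_in_events)
  have "{\<omega> \<in> space M. n / 2 \<le> card (unlikely_prefixes a J n (\<lambda>k. U k \<omega>))}
      = {\<omega> \<in> space M. n / 2 \<le> card {mj \<in> S. \<omega> \<in> B mj}}"
    by (intro Collect_cong conj_cong refl arg_cong[where f = "\<lambda>A. n / 2 \<le> real (card A)"])
       (auto simp: unlikely_prefixes_def unlikely_prefix_event_def S_def B_def)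
  also have "prob \<dots> \<le> (\<Sum>mj\<in>S. prob (B mj)) / (n / 2)"
    using assms B by (intro prob_card_ge_le) (auto simp: S_def)
  also have "\<dots> \<le> (n * (chernoff s a ^ Suc J / (1 - chernoff s a))) / (n / 2)"
  proof (rule divide_right_mono)
    have "(\<Sum>mj\<in>S. prob (B mj)) = (\<Sum>m\<in>{1..n}. \<Sum>j\<in>{J<..m}. prob (B (m, j)))"
      unfolding S_def by (subst sum.Sigma) (auto simp: case_prod_unfold)
    also have "\<dots> \<le> (\<Sum>m\<in>{1..n}. \<Sum>j\<in>{J<..m}. chernoff s a ^ j)"
      unfolding B_def using assms by (auto intro!: sum_mono prob_unlikely_prefix_event_le)
    also have "\<dots> \<le> (\<Sum>m\<in>{1..n}. chernoff s a ^ Suc J / (1 - chernoff s a))"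
      using assms chernoff_nonneg by (intro sum_mono sum_power_greaterThanAtMost_le) auto
    finally show "(\<Sum>mj\<in>S. prob (B mj)) \<le> n * (chernoff s a ^ Suc J / (1 - chernoff s a))"
      by simp
  qed simp
  also have "\<dots> = 2 * chernoff s a ^ Suc J / (1 - chernoff s a)"
    using assms by simp
  finally show ?thesis .
qed

lemma cgr_D_le_floor_add:
  assumes "0 < c" "1 \<le> m" "m \<le> n" and small: "\<forall>m. N0 \<le> m \<longrightarrow> m \<le> n \<longrightarrow> cgr_D u m \<le> c * ln m"
  shows "cgr_D u m \<le> nat \<lfloor>c * ln n\<rfloor> + N0"
proof (cases "m < N0")
  case True
  then show ?thesis using cgr_D_le[OF assms(2), of u] by simp
next
  case False
  then have "cgr_D u m \<le> c * ln m" using small assms by simp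
  also have "\<dots> \<le> c * ln n" using assms by (intro mult_left_mono) auto
  finally have "cgr_D u m \<le> nat \<lfloor>c * ln n\<rfloor>" by (rule le_nat_floor)
  then show ?thesis by simp
qed

text \<open>If \<open>D\<^sub>m \<le> c ln m\<close> for \<open>N\<^sub>0 \<le> m \<le> n\<close>, then at most \<open>O(n\<^sup>a\<^sup>c ln n) = o(n)\<close> nodes of \<open>T\<^sub>n\<close> are likely
  words, so most of its \<open>n + 1\<close> nodes are unlikely prefixes.\<close>
lemma eventually_many_unlikely_prefixes:
  assumes "0 < c" "0 < a" "a * c < 1"
  shows "\<forall>\<^sub>F n in sequentially. \<forall>u. (\<forall>m. N0 \<le> m \<longrightarrow> m \<le> n \<longrightarrow> cgr_D u m \<le> c * ln m) \<longrightarrow>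
           n / 2 \<le> card (unlikely_prefixes a J n u)"
proof -
  define C where "C = real (card {x :: letter list. length x \<le> J})"
  have "\<forall>\<^sub>F n in sequentially.
      C + 1 + (c * ln n + N0 + 1) * exp (a * N0) * n powr (a * c) \<le> n / 2"
    using assms by real_asymp
  moreover have "\<forall>\<^sub>F n in sequentially. 1 \<le> n" by (rule eventually_ge_at_top)
  ultimately show ?thesis
  proof eventually_elim
    case (elim n)
    show ?case
    proof (intro allI impI)
      fix u assume small: "\<forall>m. N0 \<le> m \<longrightarrow> m \<le> n \<longrightarrow> cgr_D u m \<le> c * ln m"
      define K where "K = nat \<lfloor>c * ln n\<rfloor> + N0"
      have K: "real K \<le> c * ln n + N0"
        using assms elim by (simp add: K_def of_nat_floor)
      have "a * K \<le> a * (c * ln n + N0)" using K assms by (intro mult_left_mono) auto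
      then have "exp (a * K) \<le> exp (a * (c * ln n + N0))" by simp
      also have "\<dots> = exp (a * N0) * n powr (a * c)"
        using elim by (simp add: powr_def algebra_simps exp_add)
      finally have "(real K + 1) * exp (a * K) \<le> (c * ln n + N0 + 1) * (exp (a * N0) * n powr (a * c))"
        using K by (intro mult_mono) auto
      moreover have "real n + 1 \<le> C + (real K + 1) * exp (a * K) + card (unlikely_prefixes a J n u)"
        unfolding C_def K_def using assms small
        by (intro card_cgr_tree_le_unlikely cgr_D_le_floor_add) auto
      ultimately show "n / 2 \<le> card (unlikely_prefixes a J n u)"
        using elim by (simp add: mult.assoc)
    qed
  qed
qed

lemma prob_cgr_D_always_small_le:
  assumes "0 < c" "0 < a" "a * c < 1" "0 < s" "s < 1" "chernoff s a < 1"
  shows "prob {\<omega> \<in> space M. \<forall>m \<ge> N0. cgr_D (\<lambda>k. U k \<omega>) m \<le> c * ln m}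
           \<le> 2 * chernoff s a ^ Suc J / (1 - chernoff s a)"
proof -
  obtain n where "1 \<le> n" and many: "\<And>u. (\<forall>m. N0 \<le> m \<longrightarrow> m \<le> n \<longrightarrow> cgr_D u m \<le> c * ln m) \<Longrightarrow>
      n / 2 \<le> card (unlikely_prefixes a J n u)"
    using eventually_happens'[OF sequentially_bot
        eventually_conj[OF eventually_many_unlikely_prefixes[OF assms(1-3), of N0 J] eventually_ge_at_top[of 1]]]
    by blast
  have "prob {\<omega> \<in> space M. \<forall>m \<ge> N0. cgr_D (\<lambda>k. U k \<omega>) m \<le> c * ln m}
      \<le> prob {\<omega> \<in> space M. n / 2 \<le> card (unlikely_prefixes a J n (\<lambda>k. U k \<omega>))}"
    using many many_unlikely_prefixes_in_events[of "n / 2" a J n] by (intro finite_measure_mono) auto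
  also have "\<dots> \<le> 2 * chernoff s a ^ Suc J / (1 - chernoff s a)"
    using assms \<open>1 \<le> n\<close> by (intro prob_many_unlikely_prefixes_le)
  finally show ?thesis .
qed

lemma prob_cgr_D_always_small_eq_0:
  assumes "0 < c" "c * shannon_entropy < 1"
  shows "prob {\<omega> \<in> space M. \<forall>m \<ge> N0. cgr_D (\<lambda>k. U k \<omega>) m \<le> c * ln m} = 0"
proof -
  define a where "a = (shannon_entropy + 1 / c) / 2"
  have "0 < c * shannon_entropy" using assms shannon_entropy_pos by simp
  then have a: "shannon_entropy < a" "0 < a" "a * c < 1"
    using assms by (auto simp: a_def field_simps)
  obtain s where s: "0 < s" "s < 1" "chernoff s a < 1"
    using exists_chernoff_lt_1[OF a(1)] .
  have "prob {\<omega> \<in> space M. \<forall>m \<ge> N0. cgr_D (\<lambda>k. U k \<omega>) m \<le> c * ln m} \<le> 0"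
  proof (rule LIMSEQ_le_const)
    have "(\<lambda>J. 2 * chernoff s a ^ Suc J / (1 - chernoff s a)) \<longlonglongrightarrow> 2 * 0 / (1 - chernoff s a)"
      using s chernoff_nonneg by (intro tendsto_intros LIMSEQ_power_zero[THEN LIMSEQ_Suc]) auto
    then show "(\<lambda>J. 2 * chernoff s a ^ Suc J / (1 - chernoff s a)) \<longlonglongrightarrow> 0" by simp
    show "\<exists>J0. \<forall>J\<ge>J0. prob {\<omega> \<in> space M. \<forall>m \<ge> N0. cgr_D (\<lambda>k. U k \<omega>) m \<le> c * ln m}
        \<le> 2 * chernoff s a ^ Suc J / (1 - chernoff s a)"
      using prob_cgr_D_always_small_le[OF assms(1) a(2,3) s] by blast
  qed
  then show ?thesis by (meson antisym measure_nonneg)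
qed

lemma AE_frequently_cgr_D_ge:
  assumes "0 < c" "c * shannon_entropy < 1"
  shows "AE \<omega> in M. \<exists>\<^sub>F n in sequentially. c \<le> cgr_D (\<lambda>k. U k \<omega>) n / ln n"
proof -
  define F where "F N0 = {\<omega> \<in> space M. \<forall>m \<ge> N0. cgr_D (\<lambda>k. U k \<omega>) m \<le> c * ln m}" for N0
  have "F N0 \<in> events" for N0
  proof -
    have "F N0 = (\<Inter>m\<in>{N0..}. {\<omega> \<in> space M. cgr_D (\<lambda>k. U k \<omega>) m \<le> c * ln m})"
      by (auto simp: F_def)
    also have "\<dots> \<in> events" by (intro sets.countable_INT') (auto intro: cgr_D_le_in_events)
    finally show ?thesis .
  qed
  moreover have "prob (F N0) = 0" for N0
    unfolding F_def by (rule prob_cgr_D_always_small_eq_0[OF assms])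
  ultimately have "AE \<omega> in M. \<omega> \<notin> F N0" for N0
    by (intro AE_not_in) (simp add: null_sets_def emeasure_eq_measure)
  then have "AE \<omega> in M. \<forall>N0. \<omega> \<notin> F N0" by (simp add: AE_all_countable)
  with AE_space show ?thesis
  proof eventually_elim
    case (elim \<omega>)
    show ?case
      unfolding frequently_sequentially
    proof
      fix N
      obtain m where "max N 2 \<le> m" "c * ln m < cgr_D (\<lambda>k. U k \<omega>) m"
        using elim(1) elim(2)[rule_format, of "max N 2"] by (auto simp: F_def not_le)
      moreover have "0 < ln m" using \<open>max N 2 \<le> m\<close> by simp
      ultimately show "\<exists>n\<ge>N. c \<le> cgr_D (\<lambda>k. U k \<omega>) n / ln n"
        by (intro exI[of _ m]) (auto simp: field_simps)
    qed
  qed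
qed

lemma AE_limsup_liminf_cgr_D:
  "AE \<omega> in M.
     ereal (1 / shannon_entropy) \<le> limsup (\<lambda>n. ereal (cgr_D (\<lambda>k. U k \<omega>) n / ln n)) \<and>
     liminf (\<lambda>n. ereal (cgr_D (\<lambda>k. U k \<omega>) n / ln n)) = ereal (1 / hplus)"
proof -
  have "AE \<omega> in M. ereal (1 / shannon_entropy) \<le> limsup (\<lambda>n. ereal (cgr_D (\<lambda>k. U k \<omega>) n / ln n))"
  proof (rule AE_ereal_ge_if_scaled)
    fix c :: real assume "0 < c" "c < 1"
    then have "AE \<omega> in M. \<exists>\<^sub>F n in sequentially. c * (1 / shannon_entropy) \<le> cgr_D (\<lambda>k. U k \<omega>) n / ln n"
      using shannon_entropy_pos by (intro AE_frequently_cgr_D_ge) auto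
    then show "AE \<omega> in M. ereal (c * (1 / shannon_entropy)) \<le> limsup (\<lambda>n. ereal (cgr_D (\<lambda>k. U k \<omega>) n / ln n))"
      by eventually_elim (intro Limsup_ge_if_frequently, simp)
  qed
  moreover have "AE \<omega> in M. ereal (1 / hplus) \<le> liminf (\<lambda>n. ereal (cgr_D (\<lambda>k. U k \<omega>) n / ln n))"
  proof (rule AE_ereal_ge_if_scaled)
    fix c :: real assume "0 < c" "c < 1"
    then have "AE \<omega> in M. \<forall>\<^sub>F n in sequentially. c * (1 / hplus) \<le> cgr_D (\<lambda>k. U k \<omega>) n / ln n"
      using hplus_pos by (intro AE_eventually_cgr_D_ge) auto
    then show "AE \<omega> in M. ereal (c * (1 / hplus)) \<le> liminf (\<lambda>n. ereal (cgr_D (\<lambda>k. U k \<omega>) n / ln n))"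
      by eventually_elim (intro Liminf_bounded, simp)
  qed
  moreover have "AE \<omega> in M. liminf (\<lambda>n. ereal (cgr_D (\<lambda>k. U k \<omega>) n / ln n)) \<le> ereal (1 / hplus)"
  proof (rule AE_ereal_le_if_scaled)
    fix c :: real assume "0 < c" "c < 1"
    then have "AE \<omega> in M. \<exists>\<^sub>F n in sequentially. cgr_D (\<lambda>k. U k \<omega>) n / ln n \<le> 1 / (c * hplus)"
      by (intro AE_frequently_cgr_D_le)
    then show "AE \<omega> in M. liminf (\<lambda>n. ereal (cgr_D (\<lambda>k. U k \<omega>) n / ln n)) \<le> ereal (1 / hplus / c)"
      by eventually_elim (intro Liminf_le_if_frequently, simp add: mult.commute)
  qed
  ultimately show ?thesis
    by eventually_elim (blast intro: antisym)
qed

end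

theorem mainTheorem7:
  fixes M :: "'s measure" and U :: "nat \<Rightarrow> 's \<Rightarrow> letter" and p :: "letter \<Rightarrow> real"
  assumes "prob_space M"
    and "prob_space.indep_vars M (\<lambda>_. count_space UNIV) U {1..}"
    and "\<And>n u. n \<ge> 1 \<Longrightarrow> prob_space.prob M {\<omega> \<in> space M. U n \<omega> = u} = p u"
    and "\<And>u. p u > 0"
    and "\<exists>u v. p u \<noteq> p v"
  shows "(let h = - (\<Sum>u\<in>{A,C,G,T}. p u * ln (p u));
              hplus = ln (1 / Min (p ` {A,C,G,T}))
          in 1 / h > 1 / hplus \<and>
             (AE \<omega> in M.
                limsup (\<lambda>n. ereal (real (cgr_D (\<lambda>k. U k \<omega>) n) / ln (real n))) \<ge> ereal (1 / h) \<and>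
                liminf (\<lambda>n. ereal (real (cgr_D (\<lambda>k. U k \<omega>) n) / ln (real n))) = ereal (1 / hplus)))"
proof -
  interpret prob_space M by fact
  have "(\<Sum>u\<in>UNIV. p u) = 1"
    using sum_prob_values[of "U 1"] assms(2,3) by (simp add: indep_vars_def)
  then interpret cgr_prob M p U
    using assms by unfold_locales (auto simp: card_letter)
  have "1 / hplus < 1 / shannon_entropy"
    using shannon_entropy_pos shannon_entropy_lt_hplus[OF assms(5)] by (simp add: frac_less2)
  then show ?thesis
    using AE_limsup_liminf_cgr_D
    by (simp add: Let_def shannon_entropy_def hplus_def pmin_def UNIV_letter)
qed

end
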